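(* Let $f_{r,k}(x)=x^2\exp(r-x)+k$. For any $0\leq k<2$ there exists $r^*(k)$ such that for all $r\geq r^*(k)$ the map $f_{r,k}$ has an unstable fixed point $x_f>2$, i.e. $f_{r,k}(x_f)=x_f$ and $|f_{r,k}'(x_f)|>1$. *)

theory Defs
  imports "HOL-Analysis.Analysis"
begin

definition f_rk :: "real \<Rightarrow> real \<Rightarrow> real \<Rightarrow> real" where
  "f_rk r k x = x^2 * exp (r - x) + k"

end

theory Submission
  imports Defs
begin

(* For r \<ge> 5 we have f(5) \<ge> 5 while f(x) - x \<rightarrow> -\<infinity>, so the intermediate value theorem
   gives a fixed point x \<ge> 5. Substituting the fixed-point equation x^2 e^(r-x) = x - k into
   f'(x) = (2x - x^2) e^(r-x) gives f'(x) = (2-x)(x-k)/x, whose modulus exceeds 1 as soon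
   as x > 4 and k \<le> 2, because then (x-2)(x-k) \<ge> (x-2)^2 > x. *)

lemma fixed_point_above:
  fixes f :: "real \<Rightarrow> real"
  assumes cont: "continuous_on {a..} f" and "a \<le> f a"
    and "eventually (\<lambda>x. f x \<le> x) at_top"
  shows "\<exists>x\<ge>a. f x = x"
proof -
  obtain N where N: "\<And>x. N \<le> x \<Longrightarrow> f x \<le> x"
    using assms(3) unfolding eventually_at_top_linorder by blast
  define b where "b = max a N"
  have "continuous_on {a..b} f"
    using cont by (rule continuous_on_subset) auto
  then have "continuous_on {a..b} (\<lambda>x. f x - x)"
    by (intro continuous_intros)
  moreover have "f b - b \<le> 0" "a \<le> b"
    using N[of b] unfolding b_def by auto
  ultimately obtain x where "a \<le> x" "f x - x = 0"
    using IVT2'[of "\<lambda>x. f x - x" b 0 a] \<open>a \<le> f a\<close> by auto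
  then show ?thesis by auto
qed

lemma deriv_f_rk: "deriv (f_rk r k) x = (2 * x - x^2) * exp (r - x)"
proof (rule DERIV_imp_deriv)
  show "(f_rk r k has_real_derivative (2 * x - x^2) * exp (r - x)) (at x)"
    unfolding f_rk_def[abs_def]
    by (auto intro!: derivative_eq_intros simp: algebra_simps power2_eq_square)
qed

lemma continuous_on_f_rk: "continuous_on S (f_rk r k)"
  unfolding f_rk_def[abs_def] by (intro continuous_intros)

lemma deriv_f_rk_at_fixed_point:
  assumes "f_rk r k x = x" and "x \<noteq> 0"
  shows "deriv (f_rk r k) x = (2 - x) * (x - k) / x"
proof -
  have fixed: "x^2 * exp (r - x) = x - k"
    using assms(1) unfolding f_rk_def by simp
  have "deriv (f_rk r k) x = (2 - x) / x * (x^2 * exp (r - x))"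
    unfolding deriv_f_rk using assms(2) by (simp add: field_simps power2_eq_square)
  then show ?thesis
    unfolding fixed by simp
qed

lemma f_rk_fixed_point_unstable:
  assumes "f_rk r k x = x" and "4 < x" and "k \<le> 2"
  shows "\<bar>deriv (f_rk r k) x\<bar> > 1"
proof -
  have "x < (x - 2) * (x - 2)"
    using \<open>4 < x\<close> mult_pos_pos[of "x - 1" "x - 4"] by (simp add: algebra_simps)
  also have "\<dots> \<le> (x - 2) * (x - k)"
    using assms(2,3) by (intro mult_left_mono) auto
  finally have "1 < (x - 2) * (x - k) / x"
    using \<open>4 < x\<close> by (simp add: pos_less_divide_eq)
  also have "\<dots> = \<bar>deriv (f_rk r k) x\<bar>"
    using deriv_f_rk_at_fixed_point[OF assms(1)] assms(2,3) by (simp add: abs_mult)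
  finally show ?thesis .
qed

lemma f_rk_eventually_below_diagonal: "eventually (\<lambda>x. f_rk r k x \<le> x) at_top"
proof -
  have "((\<lambda>x::real. exp r * (x^2 / exp x)) \<longlongrightarrow> 0) at_top"
    using tendsto_mult_right_zero[OF tendsto_power_div_exp_0] .
  then have "eventually (\<lambda>x::real. exp r * (x^2 / exp x) < 1) at_top"
    by (rule order_tendstoD(2)) simp
  moreover have "eventually (\<lambda>x::real. k + 1 \<le> x) at_top"
    by (rule eventually_ge_at_top)
  ultimately show ?thesis
  proof eventually_elim
    case (elim x)
    have "x^2 * exp (r - x) = exp r * (x^2 / exp x)"
      by (simp add: exp_diff)
    with elim show ?case
      unfolding f_rk_def by linarith
  qed
qed

lemma f_rk_has_fixed_point_ge_5:
  assumes "5 \<le> r" and "0 \<le> k"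
  shows "\<exists>x\<ge>5. f_rk r k x = x"
proof (rule fixed_point_above[OF continuous_on_f_rk _ f_rk_eventually_below_diagonal])
  have "1 \<le> exp (r - 5)"
    using assms(1) by simp
  moreover have "f_rk r k 5 = 25 * exp (r - 5) + k"
    unfolding f_rk_def by simp
  ultimately show "5 \<le> f_rk r k 5"
    using assms(2) by linarith
qed

theorem lemma3p4:
  fixes k :: real
  assumes "0 \<le> k" and "k < 2"
  shows "\<exists>rstar::real. \<forall>r\<ge>rstar. \<exists>xf::real. xf > 2 \<and> f_rk r k xf = xf \<and>
           \<bar>deriv (f_rk r k) xf\<bar> > 1"
proof (rule exI[of _ 5], intro allI impI)
  fix r :: real
  assume "5 \<le> r"
  then obtain xf where "5 \<le> xf" and fixed: "f_rk r k xf = xf"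
    using f_rk_has_fixed_point_ge_5 assms(1) by blast
  moreover have "\<bar>deriv (f_rk r k) xf\<bar> > 1"
    using \<open>5 \<le> xf\<close> assms(2) by (intro f_rk_fixed_point_unstable[OF fixed]) auto
  ultimately show "\<exists>xf. xf > 2 \<and> f_rk r k xf = xf \<and> \<bar>deriv (f_rk r k) xf\<bar> > 1"
    by (intro exI[of _ xf]) auto
qed

end
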